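(* Let $k\in\{2,\dots,N\}$ and suppose $J_k\le k-1$. Then for every $j$ with $J_k\le j\le k-1$, $$j\cdot h^+_{j+1,k}\ \ge\ \sum_{j'=1}^{j}h^+_{j',k}.$$
   Context: Fix $N\in\mathbb{N}$. A function $f:[0,1]\to\mathbb{R}$ is inverse S-shaped if it is strictly increasing, continuously differentiable, and there is $x_0\in[0,1]$ such that $f'$ is strictly decreasing on $[0,x_0]$ and strictly increasing on $[x_0,1]$. Let $W^+:[0,1]\to[0,1]$ be inverse S-shaped with $W^+(0)=0$, $W^+(1)=1$. For $k\in\{1,\dots,N\}$ and $j\in\{1,\dots,k\}$ let $h^+_{j,k}:=W^+\!\left(\frac{k-j+1}{N}\right)-W^+\!\left(\frac{k-j}{N}\right)$, and let $J_k:=\min\{j\in\{1,\dots,k\}: j\,h^+_{j+1,k}\ge\sum_{j'=1}^{j}h^+_{j',k}\}$ with $h^+_{k+1,k}:=\infty$. *)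

theory Defs
  imports "HOL-Analysis.Analysis"
begin

definition inverse_S_shaped :: "(real \<Rightarrow> real) \<Rightarrow> bool" where
  "inverse_S_shaped f \<longleftrightarrow>
     strict_mono_on {0..1} f \<and>
     (\<exists>f'. (\<forall>x\<in>{0..1}. (f has_real_derivative f' x) (at x within {0..1})) \<and>
           continuous_on {0..1} f' \<and>
           (\<exists>x0\<in>{0..1}. strict_antimono_on {0..x0} f' \<and> strict_mono_on {x0..1} f'))"

definition hplus :: "(real \<Rightarrow> real) \<Rightarrow> nat \<Rightarrow> nat \<Rightarrow> nat \<Rightarrow> real" where
  "hplus W N j k = W (real (k - j + 1) / real N) - W (real (k - j) / real N)"

text \<open>The defining condition of J_k; for j = k the convention h_{k+1,k} = \<infinity>
  makes it hold automatically.\<close>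
definition Jcond :: "(real \<Rightarrow> real) \<Rightarrow> nat \<Rightarrow> nat \<Rightarrow> nat \<Rightarrow> bool" where
  "Jcond W N k j \<longleftrightarrow>
     j = k \<or> real j * hplus W N (j + 1) k \<ge> (\<Sum>j'=1..j. hplus W N j' k)"

definition Jk :: "(real \<Rightarrow> real) \<Rightarrow> nat \<Rightarrow> nat \<Rightarrow> nat" where
  "Jk W N k = (LEAST j. j \<in> {1..k} \<and> Jcond W N k j)"

end

theory Submission
  imports Defs
begin

(* Write \<Delta>(x) = W(x + 1/N) - W(x), so that h_j = \<Delta>((k - j)/N): increasing j walks the grid
   leftwards. By the mean value theorem a second difference \<Delta>(x + d) - \<Delta>(x) has the sign of
   W'(y + d) - W'(y) for some y in (x, x + d); since W' falls and then rises, once the increments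
   of W grow weakly they grow strictly from then on. Read leftwards and contraposed: once
   h_j \<le> h_(j+1), the sequence h increases strictly. This lets the inequality
   j h_(j+1) \<ge> h_1 + ... + h_j pass from j to j + 1, starting at J_k. *)

lemma valley_shaped_rise_persists:
  fixes g :: "real \<Rightarrow> real"
  assumes dec: "strict_antimono_on {l..x0} g" and inc: "strict_mono_on {x0..u} g"
    and "l \<le> y" "y < z" "z + d \<le> u" "0 < d"
    and "g y \<le> g (y + d)"
  shows "g z < g (z + d)"
proof -
  have "x0 < y + d"
  proof (rule ccontr)
    assume "\<not> x0 < y + d"
    then have "g (y + d) < g y"
      using assms by (intro monotone_onD[OF dec, simplified]) auto
    with \<open>g y \<le> g (y + d)\<close> show False by simp
  qed
  show ?thesis
  proof (cases "x0 \<le> z")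
    case True
    then show ?thesis
      using assms by (intro monotone_onD[OF inc, simplified]) auto
  next
    case False
    have "g z < g y"
      using False assms by (intro monotone_onD[OF dec, simplified]) auto
    moreover have "g (y + d) < g (z + d)"
      using \<open>x0 < y + d\<close> assms by (intro monotone_onD[OF inc, simplified]) auto
    ultimately show ?thesis
      using \<open>g y \<le> g (y + d)\<close> by simp
  qed
qed

lemma increment_has_real_derivative:
  fixes W W' :: "real \<Rightarrow> real"
  assumes der: "\<And>x. x \<in> S \<Longrightarrow> (W has_real_derivative W' x) (at x within S)"
    and "T \<subseteq> S" "(+) d ` T \<subseteq> S" "x \<in> T"
  shows "((\<lambda>x. W (x + d) - W x) has_real_derivative W' (x + d) - W' x) (at x within T)"
proof (rule DERIV_diff)
  have "(W has_real_derivative W' (d + x)) (at (d + x) within (+) d ` T)"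
    using assms by (intro has_field_derivative_subset[OF der]) auto
  then show "((\<lambda>x. W (x + d)) has_real_derivative W' (x + d)) (at x within T)"
    by (subst (asm) DERIV_at_within_shift) (simp add: add.commute)
  show "(W has_real_derivative W' x) (at x within T)"
    using assms by (intro has_field_derivative_subset[OF der]) auto
qed

lemma increment_mvt:
  fixes W W' :: "real \<Rightarrow> real"
  assumes der: "\<And>x. x \<in> {l..u} \<Longrightarrow> (W has_real_derivative W' x) (at x within {l..u})"
    and "l \<le> p" "p + 2 * d \<le> u" "0 < d"
  obtains y where "p < y" "y < p + d"
    and "(W (p + 2 * d) - W (p + d)) - (W (p + d) - W p) = d * (W' (y + d) - W' y)"
proof -
  let ?D = "\<lambda>x. W (x + d) - W x"
  have "\<exists>y\<in>{p<..<p + d}. ?D (p + d) - ?D p = (W' (y + d) - W' y) * (p + d - p)"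
  proof (rule mvt_simple[where f' = "\<lambda>x. (*) (W' (x + d) - W' x)"])
    fix x assume "p \<le> x" "x \<le> p + d"
    moreover have "{p..p + d} \<subseteq> {l..u}" "(+) d ` {p..p + d} \<subseteq> {l..u}"
      using assms by auto
    ultimately have "(?D has_real_derivative W' (x + d) - W' x) (at x within {p..p + d})"
      by (intro increment_has_real_derivative[OF der]) auto
    then show "(?D has_derivative (*) (W' (x + d) - W' x)) (at x within {p..p + d})"
      by (simp add: has_field_derivative_def)
  qed (use assms in auto)
  then obtain y where "p < y" "y < p + d"
    and "?D (p + d) - ?D p = (W' (y + d) - W' y) * (p + d - p)"
    by auto
  moreover have "p + d + d = p + 2 * d"
    by simp
  ultimately show ?thesis
    using that[of y] by (simp add: mult.commute)
qed

lemma increment_growth_persists: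
  fixes W W' :: "real \<Rightarrow> real"
  assumes der: "\<And>x. x \<in> {l..u} \<Longrightarrow> (W has_real_derivative W' x) (at x within {l..u})"
    and dec: "strict_antimono_on {l..x0} W'" and inc: "strict_mono_on {x0..u} W'"
    and "l \<le> a" "a + 3 * d \<le> u" "0 < d"
    and "W (a + d) - W a \<le> W (a + 2 * d) - W (a + d)"
  shows "W (a + 2 * d) - W (a + d) < W (a + 3 * d) - W (a + 2 * d)"
proof -
  have "a + 2 * d \<le> u" "l \<le> a + d" "a + d + 2 * d \<le> u"
    using assms by simp_all
  obtain y where y: "a < y" "y < a + d"
    and y_eq: "(W (a + 2 * d) - W (a + d)) - (W (a + d) - W a) = d * (W' (y + d) - W' y)"
    using increment_mvt[OF der \<open>l \<le> a\<close> \<open>a + 2 * d \<le> u\<close> \<open>0 < d\<close>] by blast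
  obtain z where z: "a + d < z" "z < a + d + d"
    and z_eq: "(W (a + d + 2 * d) - W (a + d + d)) - (W (a + d + d) - W (a + d))
      = d * (W' (z + d) - W' z)"
    using increment_mvt[OF der \<open>l \<le> a + d\<close> \<open>a + d + 2 * d \<le> u\<close> \<open>0 < d\<close>] by blast
  have "0 \<le> d * (W' (y + d) - W' y)"
    using y_eq assms by simp
  then have "W' y \<le> W' (y + d)"
    using \<open>0 < d\<close> by (simp add: zero_le_mult_iff)
  then have "W' z < W' (z + d)"
    using y z assms by (intro valley_shaped_rise_persists[OF dec inc, of y]) auto
  then have "0 < d * (W' (z + d) - W' z)"
    using \<open>0 < d\<close> by simp
  moreover have points: "a + d + 2 * d = a + 3 * d" "a + d + d = a + 2 * d"
    by simp_all
  ultimately show ?thesis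
    using z_eq
    unfolding points by linarith
qed

definition rises_persist :: "(nat \<Rightarrow> real) \<Rightarrow> nat \<Rightarrow> bool" where
  "rises_persist h k \<longleftrightarrow>
     (\<forall>i. 1 \<le> i \<longrightarrow> i + 2 \<le> k \<longrightarrow> h i \<le> h (i + 1) \<longrightarrow> h (i + 1) < h (i + 2))"

lemma rises_persist_descent:
  assumes rise: "rises_persist h k"
    and "h (j + 1) < h j" "j + 1 \<le> k" "1 \<le> i" "i \<le> j"
  shows "h j \<le> h i"
proof -
  have "h j \<le> h i \<and> h (i + 1) < h i"
    using \<open>i \<le> j\<close>
  proof (induction i rule: inc_induct)
    case base
    then show ?case using assms by simp
  next
    case (step n)
    have "h (n + 1) < h n"
    proof (rule ccontr)
      assume "\<not> h (n + 1) < h n"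
      then have "h (n + 2) > h (n + 1)"
        using rise step.hyps \<open>1 \<le> i\<close> \<open>j + 1 \<le> k\<close> unfolding rises_persist_def by auto
      with step.IH show False by simp
    qed
    with step.IH show ?case by simp
  qed
  then show ?thesis ..
qed

lemma rises_persist_average_step:
  fixes h :: "nat \<Rightarrow> real"
  assumes rise: "rises_persist h k" and "1 \<le> j" "j + 2 \<le> k"
    and avg: "(\<Sum>i=1..j. h i) \<le> real j * h (j + 1)"
  shows "(\<Sum>i=1..j + 1. h i) \<le> real (j + 1) * h (j + 2)"
  \<comment> \<open>If h_j > h_(j+1), then h falls on 1..j+1, so the average of h_1..h_j exceeds h_(j+1).\<close>
proof (cases "h j \<le> h (j + 1)")
  case True
  then have "h (j + 1) < h (j + 2)"
    using rise assms unfolding rises_persist_def by simp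
  have "(\<Sum>i=1..j + 1. h i) = (\<Sum>i=1..j. h i) + h (j + 1)"
    by simp
  also have "\<dots> \<le> real (j + 1) * h (j + 1)"
    using avg by (simp add: algebra_simps)
  also have "\<dots> \<le> real (j + 1) * h (j + 2)"
    using \<open>h (j + 1) < h (j + 2)\<close> by (intro mult_left_mono) auto
  finally show ?thesis .
next
  case False
  have "real j * h j = (\<Sum>i=1..j. h j)"
    by simp
  also have "\<dots> \<le> (\<Sum>i=1..j. h i)"
    using False assms by (intro sum_mono rises_persist_descent[OF rise]) auto
  finally have "real j * h j \<le> real j * h (j + 1)"
    using avg by simp
  with False \<open>1 \<le> j\<close> show ?thesis
    by simp
qed

lemma hplus_eq_increment:
  "j \<le> k \<Longrightarrow>
    hplus W N j k = W (real (k - j) / real N + 1 / real N) - W (real (k - j) / real N)"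
  by (simp add: hplus_def Suc_diff_le add_divide_distrib add.commute)

lemma inverse_S_shaped_hplus_rises_persist:
  assumes "inverse_S_shaped W" "k \<le> N"
  shows "rises_persist (\<lambda>j. hplus W N j k) k"
  unfolding rises_persist_def
proof (intro allI impI)
  obtain W' x0 where der: "\<forall>x\<in>{0..1}. (W has_real_derivative W' x) (at x within {0..1})"
    and dec: "strict_antimono_on {0..x0} W'" and inc: "strict_mono_on {x0..1} W'"
    using assms(1) unfolding inverse_S_shaped_def by blast
  fix i assume i: "1 \<le> i" "i + 2 \<le> k" "hplus W N i k \<le> hplus W N (i + 1) k"
  define a where "a = real (k - (i + 2)) / real N"
  define d where "d = 1 / real N"
  have "0 < real N"
    using assms i by simp
  then have "0 < d"
    unfolding d_def by simp
  have grid: "real (k - (i + 2)) / real N = a" "real (k - (i + 1)) / real N = a + d"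
    "real (k - i) / real N = a + 2 * d"
    using i \<open>0 < real N\<close> unfolding a_def d_def by (simp_all add: field_simps)
  have "hplus W N j k = W (real (k - j) / real N + d) - W (real (k - j) / real N)" if "j \<le> k" for j
    using hplus_eq_increment[OF that] unfolding d_def .
  then have h_eq: "hplus W N (i + 2) k = W (a + d) - W a"
    "hplus W N (i + 1) k = W (a + 2 * d) - W (a + d)"
    "hplus W N i k = W (a + 3 * d) - W (a + 2 * d)"
    using i by (simp_all only: grid) (simp_all add: algebra_simps)
  have "a + 3 * d \<le> 1"
    using i assms \<open>0 < real N\<close> unfolding a_def d_def by (simp add: field_simps)
  show "hplus W N (i + 1) k < hplus W N (i + 2) k"
  proof (rule ccontr)
    assume "\<not> hplus W N (i + 1) k < hplus W N (i + 2) k"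
    then have "W (a + d) - W a \<le> W (a + 2 * d) - W (a + d)"
      unfolding h_eq by simp
    then have "W (a + 2 * d) - W (a + d) < W (a + 3 * d) - W (a + 2 * d)"
      using der \<open>0 < d\<close> \<open>a + 3 * d \<le> 1\<close>
      by (intro increment_growth_persists[OF _ dec inc]) (auto simp: a_def)
    with i(3) show False
      unfolding h_eq by simp
  qed
qed

lemma Jk_LeastI:
  assumes "1 \<le> k"
  shows "Jk W N k \<in> {1..k}" "Jcond W N k (Jk W N k)"
proof -
  have "k \<in> {1..k} \<and> Jcond W N k k"
    using assms unfolding Jcond_def by simp
  then have "Jk W N k \<in> {1..k} \<and> Jcond W N k (Jk W N k)"
    unfolding Jk_def by (rule LeastI)
  then show "Jk W N k \<in> {1..k}" "Jcond W N k (Jk W N k)"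
    by simp_all
qed

theorem lemma5:
  fixes W :: "real \<Rightarrow> real" and N k j :: nat
  assumes "inverse_S_shaped W"
    and "W 0 = 0" and "W 1 = 1"
    and "\<forall>x\<in>{0..1}. W x \<in> {0..1}"
    and "2 \<le> k" and "k \<le> N"
    and "Jk W N k \<le> k - 1"
    and "Jk W N k \<le> j" and "j \<le> k - 1"
  shows "real j * hplus W N (j + 1) k \<ge> (\<Sum>j'=1..j. hplus W N j' k)"
  using \<open>Jk W N k \<le> j\<close> \<open>j \<le> k - 1\<close>
proof (induction j rule: dec_induct)
  case base
  then show ?case
    using Jk_LeastI[of k W N] assms unfolding Jcond_def by auto
next
  case (step j)
  have "1 \<le> j"
    using step.hyps Jk_LeastI(1)[of k W N] assms by auto
  with step show ?case
    using rises_persist_average_step[OF inverse_S_shaped_hplus_rises_persist[OF assms(1,6)]]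
    by (simp add: add.commute)
qed

end
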